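(* Let $n\ge2$, $v\in V(\mathbb{T}_n^2)\setminus\{\mathbf 0\}$, $h(x)=\log(1+x)/\sqrt{\log(1+\|v\|_1)}$ for $x\ge0$, and define $\eta:V(\mathbb{T}_n^2)\to[0,\infty)$ by $\eta(w)=0$ if $\|w\|_1\le\sqrt{\|v\|_1}$, $\eta(w)=h(\|w\|_1)-h(\sqrt{\|v\|_1})$ if $\sqrt{\|v\|_1}\le\|w\|_1\le\|v\|_1$, and $\eta(w)=h(\|v\|_1)-h(\sqrt{\|v\|_1})$ if $\|w\|_1\ge\|v\|_1$. Let $\eta'(w,k)=\max\{\eta(w)-\eta(u):u\in V(\mathbb{T}_n^2),\ d(w,u)\le k\}$ with $d$ the graph distance in $\mathbb{T}_n^2$. Then there is an absolute constant $C>0$ (independent of $n$ and $v$) such that $$\sum_{w\in V(\mathbb{T}_n^2)}\sum_{k=0}^\infty2^{-k}\eta'(w,k+1)^2\le C,$$ and for every $\alpha>0$ and $0<\varepsilon\le 1/2$, $$L(\alpha\eta,\varepsilon)\ge\Big\lfloor(1+\sqrt{\|v\|_1})\Big(\exp\Big(\frac{\varepsilon\sqrt{\log(1+\|v\|_1)}}{2\alpha}\Big)-1\Big)\Big\rfloor-1.$$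
   Context: $\mathbb{T}_n^2$ is the discrete torus with vertex set $\{-n+1,\dots,n\}^2$, adjacent if equal in one coordinate and differing by $1$ mod $2n$ in the other; $\mathbf 0=(0,0)$, $\|(w_1,w_2)\|_1=|w_1|+|w_2|$. For $\tau:V\to[0,\infty)$ on a finite connected graph with distance $d$: $\tau'(w,k)=\max\{\tau(w)-\tau(u):d(w,u)\le k\}$ and $L(\tau,\varepsilon)=\sup\{k\ge0 \text{ integer}:\tau'(w,k)\le\varepsilon/2\ \forall w\}-1$. *)

theory Defs
  imports "HOL-Analysis.Analysis"
begin

definition torusV :: "nat \<Rightarrow> (int \<times> int) set" where
  "torusV n = {-int n + 1 .. int n} \<times> {-int n + 1 .. int n}"

definition torus_adj :: "nat \<Rightarrow> int \<times> int \<Rightarrow> int \<times> int \<Rightarrow> bool" where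
  "torus_adj n w u \<longleftrightarrow> w \<in> torusV n \<and> u \<in> torusV n \<and>
     ((fst w = fst u \<and> ((snd w - snd u) mod (2 * int n) = (1) mod (2 * int n) \<or> (snd w - snd u) mod (2 * int n) = (-1) mod (2 * int n))) \<or>
      (snd w = snd u \<and> ((fst w - fst u) mod (2 * int n) = (1) mod (2 * int n) \<or> (fst w - fst u) mod (2 * int n) = (-1) mod (2 * int n))))"

definition torus_edges :: "nat \<Rightarrow> ((int \<times> int) \<times> (int \<times> int)) set" where
  "torus_edges n = {(w, u). torus_adj n w u}"

definition torus_dist :: "nat \<Rightarrow> int \<times> int \<Rightarrow> int \<times> int \<Rightarrow> nat" where
  "torus_dist n w u = (LEAST k. (w, u) \<in> (torus_edges n) ^^ k)"

definition norm1 :: "int \<times> int \<Rightarrow> int" where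
  "norm1 w = \<bar>fst w\<bar> + \<bar>snd w\<bar>"

definition osc :: "'a set \<Rightarrow> ('a \<Rightarrow> 'a \<Rightarrow> nat) \<Rightarrow> ('a \<Rightarrow> real) \<Rightarrow> 'a \<Rightarrow> nat \<Rightarrow> real" where
  "osc V d \<tau> w k = Max {\<tau> w - \<tau> u | u. u \<in> V \<and> d w u \<le> k}"

text \<open>L(tau,eps) = sup{k >= 0 integer : tau'(w,k) <= eps/2 for all w} - 1, valued in the
  extended reals (the supremum may be infinite).\<close>
definition Lfun :: "'a set \<Rightarrow> ('a \<Rightarrow> 'a \<Rightarrow> nat) \<Rightarrow> ('a \<Rightarrow> real) \<Rightarrow> real \<Rightarrow> ereal" where
  "Lfun V d \<tau> \<epsilon> = Sup {ereal (real k) | k. \<forall>w\<in>V. osc V d \<tau> w k \<le> \<epsilon> / 2} - 1"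

definition hfun :: "int \<times> int \<Rightarrow> real \<Rightarrow> real" where
  "hfun v x = ln (1 + x) / sqrt (ln (1 + real_of_int (norm1 v)))"

definition eta :: "int \<times> int \<Rightarrow> int \<times> int \<Rightarrow> real" where
  "eta v w = (let a = real_of_int (norm1 v); x = real_of_int (norm1 w) in
     if x \<le> sqrt a then 0
     else if x \<le> a then hfun v x - hfun v (sqrt a)
     else hfun v a - hfun v (sqrt a))"

end

theory Submission
  imports Defs
begin

(*
  The function eta v is radial: eta v w = (ln (1 + clip a |w|_1) - ln (1 + sqrt a)) / sqrt L,
  where a = |v|_1, L = ln (1 + a) and clip a x = max (sqrt a) (min a x).

  (1) Geometry: the l1-norm is 1-Lipschitz for the graph distance of the torus (each edge
      changes one coordinate by +-1 modulo 2n, hence its absolute value by at most 1), and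
      the torus is connected.  As the radial profile is nondecreasing, the decrease of eta
      on the ball of radius m around w is at most the drop of x |-> ln (1 + clip a x) over
      [|w|_1 - m, |w|_1].

  (2) Lower bound on L: that drop is at most ln (1 + m / (1 + sqrt a)).  Hence for
      m <= (1 + sqrt a) (exp (eps sqrt L / (2 alpha)) - 1) all local oscillations of
      alpha eta at scale m are at most eps / 2.

  (3) Energy bound: the drop is at most m near the origin, at most 4m / (1 + |w|_1) for
      |w|_1 <= 2a, and zero beyond.  Summing squares over the torus gives
      O(m^4) + O(m^2 log a); dividing by L = ln (1 + a) leaves at most 338 m^4, independent
      of n and v, which is summable against the weights 2^-k (with m = k + 1).
*)

section \<open>Geometry of the discrete torus\<close>

text \<open>A step of +-1 modulo 2N between two points of the window {-N+1..N} changes the absolute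
  value by at most 1; this is what makes the l1-norm 1-Lipschitz on the torus.\<close>
lemma abs_step_mod_le:
  fixes a b N :: int
  assumes "N \<ge> 1" "-N+1 \<le> a" "a \<le> N" "-N+1 \<le> b" "b \<le> N"
    and "(a - b) mod (2*N) = 1 mod (2*N) \<or> (a - b) mod (2*N) = (-1) mod (2*N)"
  shows "\<bar>\<bar>a\<bar> - \<bar>b\<bar>\<bar> \<le> 1"
proof -
  from assms(6) obtain e where e: "e = 1 \<or> e = -1" "(a - b) mod (2*N) = e mod (2*N)" by blast
  then have "(2*N) dvd (a - b - e)" by (metis mod_eq_dvd_iff)
  then obtain q where q: "a - b - e = 2*N*q" by (auto elim: dvdE)
  have "q \<ge> -1"
  proof (rule ccontr)
    assume "\<not> q \<ge> -1"
    then have "2*N*q \<le> 2*N*(-2)" using assms(1) by (intro mult_left_mono) auto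
    then show False using q assms e(1) by linarith
  qed
  moreover have "q \<le> 1"
  proof (rule ccontr)
    assume "\<not> q \<le> 1"
    then have "2*N*q \<ge> 2*N*2" using assms(1) by (intro mult_left_mono) auto
    then show False using q assms e(1) by linarith
  qed
  ultimately have "q = -1 \<or> q = 0 \<or> q = 1" by linarith
  then show ?thesis using q e(1) assms(1-5) by auto
qed

lemma finite_torusV: "finite (torusV n)"
  by (simp add: torusV_def)

lemma torus_adj_norm1_le:
  assumes "n \<ge> 1" "torus_adj n w u"
  shows "\<bar>norm1 w - norm1 u\<bar> \<le> 1"
proof -
  obtain a b c d where w: "w = (a,b)" and u: "u = (c,d)" by (cases w, cases u) auto
  have N: "int n \<ge> 1" using assms(1) by simp
  from assms(2) have V: "-int n+1 \<le> a" "a \<le> int n" "-int n+1 \<le> b" "b \<le> int n"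
     "-int n+1 \<le> c" "c \<le> int n" "-int n+1 \<le> d" "d \<le> int n"
    by (auto simp: torus_adj_def torusV_def w u)
  from assms(2) consider
      "a = c" "(b - d) mod (2*int n) = 1 mod (2*int n) \<or> (b - d) mod (2*int n) = (-1) mod (2*int n)"
    | "b = d" "(a - c) mod (2*int n) = 1 mod (2*int n) \<or> (a - c) mod (2*int n) = (-1) mod (2*int n)"
    by (auto simp: torus_adj_def w u)
  then show ?thesis
  proof cases
    case 1
    with abs_step_mod_le[OF N V(3,4,7,8)] show ?thesis by (simp add: norm1_def w u)
  next
    case 2
    with abs_step_mod_le[OF N V(1,2,5,6)] show ?thesis by (simp add: norm1_def w u)
  qed
qed

lemma torus_walk_norm1_le:
  assumes "n \<ge> 1" "(w,u) \<in> torus_edges n ^^ k"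
  shows "\<bar>norm1 w - norm1 u\<bar> \<le> int k"
  using assms(2)
proof (induction k arbitrary: u)
  case 0
  then show ?case by simp
next
  case (Suc k)
  then obtain y where y: "(w,y) \<in> torus_edges n ^^ k" "(y,u) \<in> torus_edges n" by auto
  have "\<bar>norm1 y - norm1 u\<bar> \<le> 1"
    using torus_adj_norm1_le[OF assms(1)] y(2) by (auto simp: torus_edges_def)
  with Suc.IH[OF y(1)] show ?case by simp
qed

lemma torus_edges_sym: "(torus_edges n)\<inverse> = torus_edges n"
proof -
  have flip: "(y - x) mod M = 1 mod M \<or> (y - x) mod M = (-1) mod M"
    if "(x - y) mod M = 1 mod M \<or> (x - y) mod M = (-1) mod M" for x y M :: int
    using that mod_minus_cong[of "x - y" M 1] mod_minus_cong[of "x - y" M "-1"] by auto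
  have "torus_adj n u w" if "torus_adj n w u" for w u
    using that flip unfolding torus_adj_def by metis
  then show ?thesis by (auto simp: torus_edges_def)
qed

text \<open>Every vertex is joined to the origin by a walk (moving one coordinate towards 0).\<close>
lemma torus_walk_to_origin:
  assumes "n \<ge> 1"
  shows "w \<in> torusV n \<Longrightarrow> norm1 w = int N \<Longrightarrow> (w, (0,0)) \<in> (torus_edges n)\<^sup>*"
proof (induction N arbitrary: w)
  case 0
  then have "w = (0,0)" by (cases w) (auto simp: norm1_def)
  then show ?case by simp
next
  case (Suc N)
  obtain a b where w: "w = (a,b)" by (cases w)
  have V: "-int n+1 \<le> a" "a \<le> int n" "-int n+1 \<le> b" "b \<le> int n"
    using Suc.prems by (auto simp: torusV_def w)
  have step: "?case" if "(w,u) \<in> torus_edges n" "u \<in> torusV n" "norm1 u = int N" for u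
    using Suc.IH[of u] that by (meson converse_rtrancl_into_rtrancl)
  consider "a > 0" | "a < 0" | "a = 0" "b > 0" | "a = 0" "b < 0" | "a = 0" "b = 0" by linarith
  then show ?case
  proof cases
    case 1
    show ?thesis by (rule step[of "(a-1,b)"])
      (use 1 V Suc.prems in \<open>auto simp: torus_edges_def torus_adj_def torusV_def w norm1_def\<close>)
  next
    case 2
    show ?thesis by (rule step[of "(a+1,b)"])
      (use 2 V Suc.prems in \<open>auto simp: torus_edges_def torus_adj_def torusV_def w norm1_def\<close>)
  next
    case 3
    show ?thesis by (rule step[of "(a,b-1)"])
      (use 3 V Suc.prems in \<open>auto simp: torus_edges_def torus_adj_def torusV_def w norm1_def\<close>)
  next
    case 4
    show ?thesis by (rule step[of "(a,b+1)"])
      (use 4 V Suc.prems in \<open>auto simp: torus_edges_def torus_adj_def torusV_def w norm1_def\<close>)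
  next
    case 5
    then show ?thesis using Suc.prems by (simp add: w norm1_def)
  qed
qed

text \<open>The torus is connected; in particular the graph distance is attained by a walk.\<close>
lemma torus_connected:
  assumes "n \<ge> 1" "w \<in> torusV n" "u \<in> torusV n"
  shows "\<exists>k. (w,u) \<in> torus_edges n ^^ k"
proof -
  have to_origin: "(x, (0,0)) \<in> (torus_edges n)\<^sup>*" if "x \<in> torusV n" for x
    using torus_walk_to_origin[OF assms(1) that, of "nat (norm1 x)"] by (simp add: norm1_def)
  have "((0,0), u) \<in> (torus_edges n)\<^sup>*"
    using rtrancl_converseI[OF to_origin[OF assms(3)]] torus_edges_sym by simp
  with to_origin[OF assms(2)] have "(w,u) \<in> (torus_edges n)\<^sup>*" by (rule rtrancl_trans)
  then show ?thesis by (simp add: rtrancl_power)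
qed

lemma torus_dist_norm1_le:
  assumes "n \<ge> 1" "w \<in> torusV n" "u \<in> torusV n"
  shows "\<bar>norm1 w - norm1 u\<bar> \<le> int (torus_dist n w u)"
proof -
  have "(w,u) \<in> torus_edges n ^^ (torus_dist n w u)"
    unfolding torus_dist_def using torus_connected[OF assms] by (rule LeastI_ex)
  then show ?thesis by (rule torus_walk_norm1_le[OF assms(1)])
qed

lemma torus_dist_self: "torus_dist n w w = 0"
  unfolding torus_dist_def by (rule Least_eq_0) simp

section \<open>Local oscillation and the quantity L on a finite graph\<close>

lemma osc_le:
  assumes "finite V" "w \<in> V" "d w w \<le> k" "\<And>u. u \<in> V \<Longrightarrow> d w u \<le> k \<Longrightarrow> \<tau> w - \<tau> u \<le> B"
  shows "osc V d \<tau> w k \<le> B"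
proof -
  have "{\<tau> w - \<tau> u | u. u \<in> V \<and> d w u \<le> k} = (\<lambda>u. \<tau> w - \<tau> u) ` {u \<in> V. d w u \<le> k}"
    by auto
  then show ?thesis unfolding osc_def using assms by (subst Max_le_iff) auto
qed

lemma osc_nonneg:
  assumes "finite V" "w \<in> V" "d w w \<le> k"
  shows "0 \<le> osc V d \<tau> w k"
proof -
  have "{\<tau> w - \<tau> u | u. u \<in> V \<and> d w u \<le> k} = (\<lambda>u. \<tau> w - \<tau> u) ` {u \<in> V. d w u \<le> k}"
    by auto
  then show ?thesis unfolding osc_def using assms by (subst Max_ge_iff) force+
qed

lemma Lfun_ge:
  assumes "\<forall>w\<in>V. osc V d \<tau> w k \<le> \<epsilon> / 2"
  shows "ereal (real k) - 1 \<le> Lfun V d \<tau> \<epsilon>"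
proof -
  have "ereal (real k) \<le> Sup {ereal (real k) | k. \<forall>w\<in>V. osc V d \<tau> w k \<le> \<epsilon> / 2}"
    using assms by (intro Sup_upper) blast
  then show ?thesis unfolding Lfun_def by (rule ereal_minus_mono) simp
qed

section \<open>The radial profile of eta\<close>

definition clip :: "real \<Rightarrow> real \<Rightarrow> real" where
  "clip a x = max (sqrt a) (min a x)"

lemma clip_mono: "x \<le> y \<Longrightarrow> clip a x \<le> clip a y"
  by (simp add: clip_def)

lemma clip_lipschitz: "m \<ge> 0 \<Longrightarrow> clip a x \<le> clip a (x - m) + m"
  unfolding clip_def by (auto simp: max_def min_def)

lemma clip_ge_sqrt: "sqrt a \<le> clip a x"
  by (simp add: clip_def)

lemma clip_nonneg: "a \<ge> 1 \<Longrightarrow> 0 \<le> clip a x"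
  using clip_ge_sqrt[of a x] by (meson order_trans real_sqrt_ge_zero zero_le_one)

lemma sqrt_le_self: "a \<ge> 1 \<Longrightarrow> sqrt a \<le> a"
  using real_sqrt_le_mono[of a "a\<^sup>2"] by (simp add: power2_eq_square)

lemma norm1_ge_1: "v \<in> torusV n - {(0,0)} \<Longrightarrow> norm1 v \<ge> 1"
  by (cases v) (auto simp: norm1_def)

lemma eta_clip:
  assumes "norm1 v \<ge> 1"
  shows "eta v w = (ln (1 + clip (real_of_int (norm1 v)) (real_of_int (norm1 w)))
                     - ln (1 + sqrt (real_of_int (norm1 v)))) / sqrt (ln (1 + real_of_int (norm1 v)))"
  using sqrt_le_self[of "real_of_int (norm1 v)"] assms
  by (auto simp: eta_def Let_def hfun_def clip_def diff_divide_distrib)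

definition profile_drop :: "real \<Rightarrow> real \<Rightarrow> real \<Rightarrow> real" where
  "profile_drop a m x = ln (1 + clip a x) - ln (1 + clip a (x - m))"

text \<open>Combining monotonicity of the profile with the Lipschitz property of the l1-norm:
  within distance m of w, eta decreases by at most the profile drop at |w|_1.\<close>
lemma eta_decrease_le:
  assumes n: "n \<ge> 1" and v: "norm1 v \<ge> 1" and w: "w \<in> torusV n" and u: "u \<in> torusV n"
    and d: "torus_dist n w u \<le> m"
  shows "eta v w - eta v u \<le>
    profile_drop (real_of_int (norm1 v)) (real m) (real_of_int (norm1 w)) / sqrt (ln (1 + real_of_int (norm1 v)))"
proof -
  define a where "a = real_of_int (norm1 v)"
  have a: "a \<ge> 1" using v by (simp add: a_def)
  have "\<bar>norm1 w - norm1 u\<bar> \<le> int m"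
    using torus_dist_norm1_le[OF n w u] d by linarith
  then have "clip a (real_of_int (norm1 w) - real m) \<le> clip a (real_of_int (norm1 u))"
    by (intro clip_mono) linarith
  then have "ln (1 + clip a (real_of_int (norm1 w) - real m)) \<le> ln (1 + clip a (real_of_int (norm1 u)))"
    using clip_nonneg[OF a, of "real_of_int (norm1 w) - real m"] by simp
  moreover have "0 < ln (1 + a)" using a by simp
  ultimately show ?thesis
    using v unfolding a_def[symmetric]
    by (simp add: eta_clip a_def[symmetric] profile_drop_def diff_divide_distrib divide_right_mono)
qed

text \<open>The basic estimate of the drop: the profile is ln (1 + t) with t growing by at most m.\<close>
lemma profile_drop_le_ln:
  assumes a: "a \<ge> 1" and m: "m \<ge> 0"
  shows "profile_drop a m x \<le> ln (1 + m / (1 + clip a (x - m)))"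
proof -
  define s where "s = clip a (x - m)"
  define t where "t = clip a x"
  have s0: "s \<ge> 0" and t0: "t \<ge> 0" using clip_nonneg[OF a] by (auto simp: s_def t_def)
  have ts: "t \<le> s + m" unfolding s_def t_def by (rule clip_lipschitz[OF m])
  have "profile_drop a m x = ln ((1 + t) / (1 + s))"
    using s0 t0 by (simp add: profile_drop_def ln_div s_def t_def)
  also have "\<dots> \<le> ln ((1 + s + m) / (1 + s))"
    using s0 t0 ts by (simp add: divide_right_mono)
  also have "(1 + s + m) / (1 + s) = 1 + m / (1 + s)"
    using s0 by (simp add: field_simps)
  finally show ?thesis by (simp add: s_def)
qed

lemma profile_drop_le_uniform:
  assumes a: "a \<ge> 1" and m: "m \<ge> 0"
  shows "profile_drop a m x \<le> ln (1 + m / (1 + sqrt a))"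
proof -
  have "m / (1 + clip a (x - m)) \<le> m / (1 + sqrt a)"
    using clip_ge_sqrt[of a "x - m"] clip_nonneg[OF a, of "x - m"] a m
    by (intro divide_left_mono) (auto intro!: mult_pos_pos add_pos_nonneg)
  moreover have "0 \<le> m / (1 + clip a (x - m))"
    using clip_nonneg[OF a] m by simp
  ultimately have "ln (1 + m / (1 + clip a (x - m))) \<le> ln (1 + m / (1 + sqrt a))"
    by simp
  then show ?thesis using profile_drop_le_ln[OF a m, of x] by linarith
qed

definition drop_bound :: "real \<Rightarrow> real \<Rightarrow> real \<Rightarrow> real" where
  "drop_bound a m x = (if x < 2*m then m else if x \<le> 2*a then 4*m/(1+x) else 0)"

lemma profile_drop_le_bound:
  assumes a: "a \<ge> 1" and m: "m \<ge> 1" and x: "x \<ge> 0"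
  shows "profile_drop a m x \<le> drop_bound a m x"
proof -
  define s where "s = clip a (x - m)"
  have s0: "s \<ge> 0" using clip_nonneg[OF a] by (simp add: s_def)
  have "0 \<le> m / (1 + s)" using s0 m by simp
  then have D: "profile_drop a m x \<le> m / (1 + s)"
    using profile_drop_le_ln[OF a, of m x] ln_add_one_self_le_self[of "m/(1+s)"] m
    unfolding s_def by linarith
  consider "x < 2*m" | "\<not> x < 2*m" "x - m \<ge> a" | "\<not> x < 2*m" "\<not> x - m \<ge> a" by blast
  then show ?thesis
  proof cases
    case 1
    have "m / (1 + s) \<le> m" using s0 m by (simp add: divide_le_eq)
    then show ?thesis using D 1 by (simp add: drop_bound_def)
  next
    case 2
    then have "clip a (x - m) = a" "clip a x = a" using sqrt_le_self[OF a] m by (auto simp: clip_def)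
    then show ?thesis using 2 x m by (simp add: profile_drop_def drop_bound_def)
  next
    case 3
    then have "s \<ge> x - m" by (simp add: s_def clip_def)
    then have "m / (1 + s) \<le> m / (1 + x/2)" using 3 m x by (intro divide_left_mono) auto
    also have "\<dots> = 2*m/(2+x)" by (simp add: field_simps)
    also have "\<dots> \<le> 4*m/(1+x)" using m x by (simp add: frac_le)
    finally show ?thesis using D 3 by (simp add: drop_bound_def)
  qed
qed

lemma drop_bound_sq_le:
  assumes "m \<ge> 1" "x \<ge> 0"
  shows "(drop_bound a m x)\<^sup>2 \<le>
    (if x < 2*m then m\<^sup>2 else 0) + 16 * m\<^sup>2 * (if x \<le> 2*a then 1/(1+x)\<^sup>2 else 0)"
  using assms by (auto simp: drop_bound_def power_divide)

section \<open>Counting estimates on the torus\<close>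

lemma sum_symmetric_interval_Suc:
  "(\<Sum>j\<in>{-int (Suc M)..int (Suc M)}. f j) = f (int M + 1) + f (-int M - 1) + (\<Sum>j\<in>{-int M..int M}. f j)"
proof -
  have "{-int (Suc M)..int (Suc M)} = insert (int M + 1) (insert (- int M - 1) {-int M..int M})"
    by auto
  then show ?thesis by (simp add: add.assoc)
qed

text \<open>A telescoping bound: 1/(y+1)^2 \<le> 1/y - 1/(y+1).\<close>
lemma sum_inv_sq_symmetric_le:
  fixes c :: real assumes c: "c \<ge> 1"
  shows "(\<Sum>j\<in>{-int M..int M}. 1/(c + \<bar>real_of_int j\<bar>)\<^sup>2) \<le> 3/c - 2/(c + real M)"
proof (induction M)
  case 0
  have "1/c\<^sup>2 \<le> 1/c" using c by (simp add: power2_eq_square divide_le_eq)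
  then show ?case by simp
next
  case (Suc M)
  define y where "y = c + real M"
  have y: "y \<ge> 1" using c by (simp add: y_def)
  have telescope: "1/(y+1)\<^sup>2 \<le> 1/y - 1/(y+1)"
  proof -
    have "1/(y+1)\<^sup>2 \<le> 1/(y*(y+1))" using y
      by (intro divide_left_mono) (auto simp: power2_eq_square intro!: mult_right_mono mult_pos_pos)
    also have "\<dots> = 1/y - 1/(y+1)" using y by (simp add: field_simps)
    finally show ?thesis .
  qed
  have "(\<Sum>j\<in>{-int (Suc M)..int (Suc M)}. 1/(c + \<bar>real_of_int j\<bar>)\<^sup>2)
      = 2/(y+1)\<^sup>2 + (\<Sum>j\<in>{-int M..int M}. 1/(c + \<bar>real_of_int j\<bar>)\<^sup>2)"
    unfolding sum_symmetric_interval_Suc by (simp add: y_def algebra_simps)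
  also have "\<dots> \<le> 2/(y+1)\<^sup>2 + (3/c - 2/y)" using Suc.IH by (simp add: y_def)
  also have "\<dots> \<le> 3/c - 2/(c + real (Suc M))" using telescope by (simp add: y_def algebra_simps)
  finally show ?case .
qed

text \<open>The symmetric harmonic sum, compared with ln via 1/(y+1) \<le> ln (y+1) - ln y.\<close>
lemma sum_inv_symmetric_le:
  "(\<Sum>i\<in>{-int M..int M}. 1/(1 + \<bar>real_of_int i\<bar>)) \<le> 1 + 2 * ln (1 + real M)"
proof (induction M)
  case 0
  then show ?case by simp
next
  case (Suc M)
  define y where "y = 1 + real M"
  have y: "y \<ge> 1" by (simp add: y_def)
  have ln_step: "1/(y+1) \<le> ln (y+1) - ln y"
  proof -
    have "ln (y / (y+1)) \<le> y/(y+1) - 1" using y by (intro ln_le_minus_one) auto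
    moreover have "ln (y / (y+1)) = ln y - ln (y+1)" using y by (simp add: ln_div)
    moreover have "y/(y+1) - 1 = - (1/(y+1))" using y by (simp add: field_simps)
    ultimately show ?thesis by linarith
  qed
  have "(\<Sum>i\<in>{-int (Suc M)..int (Suc M)}. 1/(1 + \<bar>real_of_int i\<bar>))
      = 2/(y+1) + (\<Sum>i\<in>{-int M..int M}. 1/(1 + \<bar>real_of_int i\<bar>))"
    unfolding sum_symmetric_interval_Suc by (simp add: y_def algebra_simps)
  also have "\<dots> \<le> 2/(y+1) + (1 + 2 * ln y)" using Suc.IH by (simp add: y_def)
  also have "\<dots> \<le> 1 + 2 * ln (1 + real (Suc M))" using ln_step by (simp add: y_def algebra_simps)
  finally show ?case .
qed

lemma torus_sum_near_origin_le:
  fixes c m :: real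
  assumes "c \<ge> 0" "m \<le> real K"
  shows "(\<Sum>w\<in>torusV n. if real_of_int (norm1 w) < 2*m then c else 0) \<le> (4*real K+1)\<^sup>2 * c"
proof -
  define B where "B = {-2*int K..2*int K} \<times> {-2*int K..2*int K}"
  have "{w\<in>torusV n. real_of_int (norm1 w) < 2*m} \<subseteq> B"
  proof
    fix w assume "w \<in> {w\<in>torusV n. real_of_int (norm1 w) < 2*m}"
    then have "norm1 w < 2 * int K" using assms(2) by simp
    then show "w \<in> B" by (cases w) (auto simp: B_def norm1_def)
  qed
  then have "(\<Sum>w\<in>torusV n. if real_of_int (norm1 w) < 2*m then c else 0) \<le> (\<Sum>w\<in>B. c)"
    using assms(1) by (subst sum.inter_filter[symmetric, OF finite_torusV])
      (intro sum_mono2, auto simp: B_def)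
  also have "\<dots> = (4*real K+1)\<^sup>2 * c"
    by (simp add: B_def card_cartesian_product power2_eq_square algebra_simps)
  finally show ?thesis .
qed

text \<open>Summing 1/(1+|w|_1)^2 over |w|_1 \<le> N: each row contributes O(1/(1+|i|)), giving O(ln N).\<close>
lemma torus_sum_inv_sq_le:
  "(\<Sum>w\<in>torusV n. if norm1 w \<le> int N then 1/(1 + real_of_int (norm1 w))\<^sup>2 else 0)
     \<le> 3 * (1 + 2 * ln (1 + real N))"
proof -
  define I where "I = {-int n+1..int n}"
  define f where "f i j = (if \<bar>i\<bar> \<le> int N then 1/(1 + \<bar>real_of_int i\<bar> + \<bar>real_of_int j\<bar>)\<^sup>2 else 0)"
    for i j :: int
  have row: "(\<Sum>j\<in>I. 1/(1 + \<bar>real_of_int i\<bar> + \<bar>real_of_int j\<bar>)\<^sup>2) \<le> 3/(1 + \<bar>real_of_int i\<bar>)" for i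
  proof -
    have "(\<Sum>j\<in>I. 1/(1 + \<bar>real_of_int i\<bar> + \<bar>real_of_int j\<bar>)\<^sup>2)
        \<le> (\<Sum>j\<in>{-int n..int n}. 1/((1 + \<bar>real_of_int i\<bar>) + \<bar>real_of_int j\<bar>)\<^sup>2)"
      by (rule sum_mono2) (auto simp: I_def add.assoc)
    also have "\<dots> \<le> 3/(1 + \<bar>real_of_int i\<bar>) - 2/((1 + \<bar>real_of_int i\<bar>) + real n)"
      by (rule sum_inv_sq_symmetric_le) simp
    also have "\<dots> \<le> 3/(1 + \<bar>real_of_int i\<bar>)" by simp
    finally show ?thesis .
  qed
  have "(\<Sum>w\<in>torusV n. if norm1 w \<le> int N then 1/(1 + real_of_int (norm1 w))\<^sup>2 else 0)
      \<le> (\<Sum>w\<in>torusV n. f (fst w) (snd w))"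
    by (intro sum_mono) (auto simp: f_def norm1_def add.assoc)
  also have "\<dots> = (\<Sum>i\<in>I. \<Sum>j\<in>I. f i j)"
    unfolding torusV_def I_def[symmetric] by (simp add: sum.cartesian_product case_prod_beta)
  also have "\<dots> \<le> (\<Sum>i\<in>I. if \<bar>i\<bar> \<le> int N then 3/(1 + \<bar>real_of_int i\<bar>) else 0)"
    by (intro sum_mono) (use row in \<open>auto simp: f_def\<close>)
  also have "\<dots> = (\<Sum>i\<in>{i\<in>I. \<bar>i\<bar> \<le> int N}. 3/(1 + \<bar>real_of_int i\<bar>))"
    by (rule sum.inter_filter[symmetric]) (simp add: I_def)
  also have "\<dots> \<le> (\<Sum>i\<in>{-int N..int N}. 3/(1 + \<bar>real_of_int i\<bar>))"
    by (rule sum_mono2) auto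
  also have "\<dots> = 3 * (\<Sum>i\<in>{-int N..int N}. 1/(1 + \<bar>real_of_int i\<bar>))"
    by (simp add: sum_distrib_left)
  also have "\<dots> \<le> 3 * (1 + 2 * ln (1 + real N))"
    using sum_inv_symmetric_le[of N] by simp
  finally show ?thesis .
qed

section \<open>The energy bound\<close>

lemma osc_eta_sq_le:
  assumes n: "n \<ge> 1" and v: "norm1 v \<ge> 1" and w: "w \<in> torusV n" and m: "m \<ge> 1"
  shows "(osc (torusV n) (torus_dist n) (eta v) w m)\<^sup>2 \<le>
    ((if real_of_int (norm1 w) < 2 * real m then (real m)\<^sup>2 else 0)
      + 16 * (real m)\<^sup>2 * (if norm1 w \<le> 2 * norm1 v then 1/(1 + real_of_int (norm1 w))\<^sup>2 else 0))
    / ln (1 + real_of_int (norm1 v))"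
proof -
  define a where "a = real_of_int (norm1 v)"
  define L where "L = ln (1 + a)"
  define x where "x = real_of_int (norm1 w)"
  have a: "a \<ge> 1" using v by (simp add: a_def)
  have L: "L > 0" using a by (simp add: L_def)
  have x: "x \<ge> 0" by (simp add: x_def norm1_def)
  have m': "real m \<ge> 1" using m by simp
  have "osc (torusV n) (torus_dist n) (eta v) w m \<le> drop_bound a (real m) x / sqrt L"
  proof (rule osc_le[OF finite_torusV w])
    fix u assume "u \<in> torusV n" "torus_dist n w u \<le> m"
    then have "eta v w - eta v u \<le> profile_drop a (real m) x / sqrt L"
      using eta_decrease_le[OF n v w] by (simp add: a_def L_def x_def)
    also have "\<dots> \<le> drop_bound a (real m) x / sqrt L"
      using profile_drop_le_bound[OF a m' x] L by (simp add: divide_right_mono)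
    finally show "eta v w - eta v u \<le> drop_bound a (real m) x / sqrt L" .
  qed (simp add: torus_dist_self)
  moreover have "0 \<le> osc (torusV n) (torus_dist n) (eta v) w m"
    by (rule osc_nonneg[OF finite_torusV w]) (simp add: torus_dist_self)
  ultimately have "(osc (torusV n) (torus_dist n) (eta v) w m)\<^sup>2 \<le> (drop_bound a (real m) x / sqrt L)\<^sup>2"
    by (intro power_mono) auto
  also have "\<dots> = (drop_bound a (real m) x)\<^sup>2 / L"
    using L by (simp add: power_divide)
  also have "\<dots> \<le> ((if x < 2 * real m then (real m)\<^sup>2 else 0)
      + 16 * (real m)\<^sup>2 * (if x \<le> 2 * a then 1/(1 + x)\<^sup>2 else 0)) / L"
    using drop_bound_sq_le[OF m' x, of a] L by (simp add: divide_right_mono)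
  also have "(x \<le> 2 * a) = (norm1 w \<le> 2 * norm1 v)"
    unfolding x_def a_def by (metis of_int_le_iff of_int_mult of_int_numeral)
  finally show ?thesis by (simp only: a_def L_def x_def)
qed

lemma energy_constant_le:
  fixes m L l :: real
  assumes m: "m \<ge> 1" and L: "L \<ge> 1/2" and l: "l \<le> 2 * L"
  shows "((4*m+1)\<^sup>2 * m\<^sup>2 + 16 * m\<^sup>2 * (3 * (1 + 2 * l))) / L \<le> 338 * m^4"
proof -
  have m2: "m\<^sup>2 \<le> m^4"
    using m by (intro power_increasing) auto
  have "(4*m+1)\<^sup>2 \<le> (5*m)\<^sup>2" using m by (intro power_mono) auto
  then have "(4*m+1)\<^sup>2 * m\<^sup>2 \<le> 25 * m^4"
    using mult_right_mono[of "(4*m+1)\<^sup>2" "(5*m)\<^sup>2" "m\<^sup>2"]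
    by (simp add: power2_eq_square power4_eq_xxxx algebra_simps)
  moreover have "16 * m\<^sup>2 * (3 * (1 + 2 * l)) \<le> 48 * m\<^sup>2 + 192 * m\<^sup>2 * L"
    using l mult_left_mono[of l "2*L" "96 * m\<^sup>2"] by (simp add: algebra_simps)
  ultimately have "((4*m+1)\<^sup>2 * m\<^sup>2 + 16 * m\<^sup>2 * (3 * (1 + 2 * l))) / L
      \<le> (25 * m^4 + 48 * m\<^sup>2 + 192 * m\<^sup>2 * L) / L"
    using L by (intro divide_right_mono) auto
  also have "\<dots> = (25 * m^4 + 48 * m\<^sup>2) / L + 192 * m\<^sup>2"
    using L by (simp add: field_simps)
  also have "\<dots> \<le> (25 * m^4 + 48 * m\<^sup>2) / (1/2) + 192 * m\<^sup>2"
    using L m by (intro add_right_mono divide_left_mono) auto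
  also have "\<dots> \<le> 338 * m^4" using m2 by simp
  finally show ?thesis .
qed

lemma sum_osc_eta_sq_le:
  assumes n: "n \<ge> 1" and v: "norm1 v \<ge> 1" and m: "m \<ge> 1"
  shows "(\<Sum>w\<in>torusV n. (osc (torusV n) (torus_dist n) (eta v) w m)\<^sup>2) \<le> 338 * (real m)^4"
proof -
  define L where "L = ln (1 + real_of_int (norm1 v))"
  define N where "N = nat (2 * norm1 v)"
  define near where "near w = (if real_of_int (norm1 w) < 2 * real m then (real m)\<^sup>2 else 0)" for w
  define far where "far w = (if norm1 w \<le> int N then 1/(1 + real_of_int (norm1 w))\<^sup>2 else 0)" for w
  have N: "int N = 2 * norm1 v" using v by (simp add: N_def)
  have "ln 2 \<le> L" using v by (simp add: L_def)
  then have L: "L \<ge> 1/2" using ln2_ge_two_thirds by linarith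
  have lnN: "ln (1 + real N) \<le> 2 * L"
  proof -
    have "real N = 2 * real_of_int (norm1 v)"
      using N by (metis of_int_of_nat_eq of_int_mult of_int_numeral)
    moreover have "0 \<le> real_of_int (norm1 v) * real_of_int (norm1 v)" by simp
    ultimately have "1 + real N \<le> (1 + real_of_int (norm1 v))\<^sup>2"
      by (simp add: power2_eq_square algebra_simps)
    then have "ln (1 + real N) \<le> ln ((1 + real_of_int (norm1 v))\<^sup>2)" using v by simp
    then show ?thesis using v by (simp add: ln_realpow L_def)
  qed
  have "(\<Sum>w\<in>torusV n. (osc (torusV n) (torus_dist n) (eta v) w m)\<^sup>2)
      \<le> (\<Sum>w\<in>torusV n. (near w + 16 * (real m)\<^sup>2 * far w) / L)"
    using osc_eta_sq_le[OF n v _ m] by (intro sum_mono) (simp add: near_def far_def N L_def)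
  also have "\<dots> = ((\<Sum>w\<in>torusV n. near w) + 16 * (real m)\<^sup>2 * (\<Sum>w\<in>torusV n. far w)) / L"
    by (simp only: sum_divide_distrib[symmetric] sum.distrib sum_distrib_left)
  also have "\<dots> \<le> ((4 * real m + 1)\<^sup>2 * (real m)\<^sup>2 + 16 * (real m)\<^sup>2 * (3 * (1 + 2 * ln (1 + real N)))) / L"
    using torus_sum_near_origin_le[of "(real m)\<^sup>2" "real m" m n] torus_sum_inv_sq_le[where n = n and N = N] L
    unfolding near_def far_def by (intro divide_right_mono add_mono mult_left_mono) auto
  also have "\<dots> \<le> 338 * (real m)^4"
    using energy_constant_le[OF _ L lnN] m by simp
  finally show ?thesis .
qed

lemma sum_suminf_le:
  fixes f :: "'a \<Rightarrow> nat \<Rightarrow> real"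
  assumes I: "finite I" and f: "\<And>w k. w \<in> I \<Longrightarrow> 0 \<le> f w k"
    and fg: "\<And>k. (\<Sum>w\<in>I. f w k) \<le> g k" and g: "summable g"
  shows "(\<forall>w\<in>I. summable (f w)) \<and> (\<Sum>w\<in>I. suminf (f w)) \<le> suminf g"
proof -
  have sf: "summable (f w)" if w: "w \<in> I" for w
  proof (rule summable_comparison_test'[OF g, of 0])
    fix k
    have "f w k \<le> (\<Sum>w\<in>I. f w k)" using I f w by (intro member_le_sum) auto
    then show "norm (f w k) \<le> g k" using f[OF w, of k] fg[of k] by simp
  qed
  have "(\<Sum>w\<in>I. suminf (f w)) = (\<Sum>k. \<Sum>w\<in>I. f w k)"
    using sf by (rule suminf_sum[symmetric])
  also have "\<dots> \<le> suminf g"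
    using sf g fg by (intro suminf_le summable_sum) auto
  finally show ?thesis using sf by blast
qed

lemma summable_geometric_times_poly4: "summable (\<lambda>k. (1/2::real)^k * (real k + 1)^4)"
proof (rule summable_ratio_test[where c = "3/4" and N = 9])
  fix k :: nat assume k: "k \<ge> 9"
  have "(real k + 2)^4 \<le> ((11/10) * (real k + 1))^4" using k by (intro power_mono) auto
  also have "\<dots> \<le> (3/2) * (real k + 1)^4"
    by (simp only: power_mult_distrib, intro mult_right_mono) (auto simp: power4_eq_xxxx)
  finally have "(real k + 2)^4 \<le> (3/2) * (real k + 1)^4" .
  then show "norm ((1/2::real)^(Suc k) * (real (Suc k) + 1)^4) \<le> 3/4 * norm ((1/2::real)^k * (real k + 1)^4)"
    by (simp add: add.commute)
qed simp

lemma eta_energy_bound: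
  assumes n: "n \<ge> 1" and v: "norm1 v \<ge> 1"
  shows "(\<forall>w\<in>torusV n. summable (\<lambda>k. (1/2) ^ k * (osc (torusV n) (torus_dist n) (eta v) w (k + 1))\<^sup>2)) \<and>
    (\<Sum>w\<in>torusV n. \<Sum>k. (1/2) ^ k * (osc (torusV n) (torus_dist n) (eta v) w (k + 1))\<^sup>2)
      \<le> 338 * (\<Sum>k. (1/2::real)^k * (real k + 1)^4)"
proof -
  define f where "f = (\<lambda>w k. (1/2::real) ^ k * (osc (torusV n) (torus_dist n) (eta v) w (k + 1))\<^sup>2)"
  define g where "g k = 338 * ((1/2::real)^k * (real k + 1)^4)" for k
  have "(\<Sum>w\<in>torusV n. f w k) \<le> g k" for k
    using mult_left_mono[OF sum_osc_eta_sq_le[OF n v, of "k+1"], of "(1/2)^k"]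
    by (simp add: f_def g_def sum_distrib_left add.commute mult.left_commute)
  moreover have "summable g"
    unfolding g_def by (intro summable_mult summable_geometric_times_poly4)
  ultimately have "(\<forall>w\<in>torusV n. summable (f w)) \<and> (\<Sum>w\<in>torusV n. suminf (f w)) \<le> suminf g"
    by (intro sum_suminf_le finite_torusV) (auto simp: f_def)
  moreover have "suminf g = 338 * (\<Sum>k. (1/2::real)^k * (real k + 1)^4)"
    unfolding g_def by (rule suminf_mult[OF summable_geometric_times_poly4])
  ultimately show ?thesis by (simp add: f_def)
qed

section \<open>The lower bound on L\<close>

lemma ln_floor_scale_le:
  fixes s c :: real
  assumes s: "s > 0" and c: "c \<ge> 0"
  shows "ln (1 + real (nat \<lfloor>s * (exp c - 1)\<rfloor>) / s) \<le> c"
proof -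
  define k where "k = real (nat \<lfloor>s * (exp c - 1)\<rfloor>)"
  have "0 \<le> s * (exp c - 1)" using s c by simp
  then have "k \<le> s * (exp c - 1)" unfolding k_def by linarith
  then have "k / s \<le> exp c - 1" using s by (simp add: pos_divide_le_eq mult.commute)
  moreover have "0 \<le> k / s" using s by (simp add: k_def)
  ultimately have "ln (1 + k / s) \<le> ln (exp c)" by (intro ln_mono) auto
  then show ?thesis by (simp add: k_def)
qed

lemma eta_L_lower_bound:
  fixes \<alpha> \<epsilon> :: real
  assumes n: "n \<ge> 1" and v: "norm1 v \<ge> 1" and \<alpha>: "\<alpha> > 0" and \<epsilon>: "0 < \<epsilon>"
  shows "Lfun (torusV n) (torus_dist n) (\<lambda>w. \<alpha> * eta v w) \<epsilon> \<ge>
    ereal (real_of_int (\<lfloor>(1 + sqrt (real_of_int (norm1 v))) *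
      (exp (\<epsilon> * sqrt (ln (1 + real_of_int (norm1 v))) / (2 * \<alpha>)) - 1)\<rfloor> - 1))"
proof -
  define a where "a = real_of_int (norm1 v)"
  define L where "L = ln (1 + a)"
  define K where "K = \<lfloor>(1 + sqrt a) * (exp (\<epsilon> * sqrt L / (2 * \<alpha>)) - 1)\<rfloor>"
  define k where "k = nat K"
  have a: "a \<ge> 1" using v by (simp add: a_def)
  have L: "L > 0" using a by (simp add: L_def)
  have sa: "1 + sqrt a > 0" using a by (simp add: add_pos_nonneg)
  have drop: "ln (1 + real k / (1 + sqrt a)) \<le> \<epsilon> * sqrt L / (2 * \<alpha>)"
    unfolding k_def K_def using sa \<epsilon> \<alpha> L by (intro ln_floor_scale_le) auto
  have "osc (torusV n) (torus_dist n) (\<lambda>w. \<alpha> * eta v w) w k \<le> \<epsilon> / 2" if w: "w \<in> torusV n" for w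
  proof (rule osc_le[OF finite_torusV w])
    fix u assume "u \<in> torusV n" "torus_dist n w u \<le> k"
    then have "eta v w - eta v u \<le> profile_drop a (real k) (real_of_int (norm1 w)) / sqrt L"
      using eta_decrease_le[OF n v w] by (simp add: a_def L_def)
    also have "\<dots> \<le> ln (1 + real k / (1 + sqrt a)) / sqrt L"
      using profile_drop_le_uniform[OF a, of "real k"] L by (simp add: divide_right_mono)
    also have "\<dots> \<le> \<epsilon> / (2 * \<alpha>)"
      using drop L by (simp add: divide_le_eq)
    finally have "\<alpha> * (eta v w - eta v u) \<le> \<alpha> * (\<epsilon> / (2 * \<alpha>))"
      using \<alpha> by (intro mult_left_mono) auto
    then show "\<alpha> * eta v w - \<alpha> * eta v u \<le> \<epsilon> / 2"
      using \<alpha> by (simp add: right_diff_distrib)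
  qed (simp add: torus_dist_self)
  then have "ereal (real k) - 1 \<le> Lfun (torusV n) (torus_dist n) (\<lambda>w. \<alpha> * eta v w) \<epsilon>"
    by (intro Lfun_ge) blast
  moreover have "ereal (real k) - 1 \<ge> ereal (real_of_int (K - 1))"
    by (simp add: k_def one_ereal_def)
  ultimately show ?thesis by (simp add: K_def L_def a_def)
qed

theorem lemma4p5:
  shows "(\<exists>C>0. \<forall>n v. n \<ge> 2 \<longrightarrow> v \<in> torusV n - {(0, 0)} \<longrightarrow>
            (\<forall>w\<in>torusV n. summable (\<lambda>k. (1/2) ^ k * (osc (torusV n) (torus_dist n) (eta v) w (k + 1))\<^sup>2)) \<and>
            (\<Sum>w\<in>torusV n. \<Sum>k. (1/2) ^ k * (osc (torusV n) (torus_dist n) (eta v) w (k + 1))\<^sup>2) \<le> C)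
     \<and> (\<forall>n v (\<alpha>::real) (\<epsilon>::real). n \<ge> 2 \<longrightarrow> v \<in> torusV n - {(0, 0)} \<longrightarrow> \<alpha> > 0 \<longrightarrow>
            0 < \<epsilon> \<longrightarrow> \<epsilon> \<le> 1/2 \<longrightarrow>
            Lfun (torusV n) (torus_dist n) (\<lambda>w. \<alpha> * eta v w) \<epsilon> \<ge>
              ereal (real_of_int (\<lfloor>(1 + sqrt (real_of_int (norm1 v))) *
                 (exp (\<epsilon> * sqrt (ln (1 + real_of_int (norm1 v))) / (2 * \<alpha>)) - 1)\<rfloor> - 1)))"
proof -
  define C :: real where "C = 338 * (\<Sum>k. (1/2::real)^k * (real k + 1)^4) + 1"
  have "0 \<le> (\<Sum>k. (1/2::real)^k * (real k + 1)^4)"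
    by (intro suminf_nonneg summable_geometric_times_poly4) simp
  then have "C > 0" by (simp add: C_def)
  moreover have "(\<forall>w\<in>torusV n. summable (\<lambda>k. (1/2) ^ k * (osc (torusV n) (torus_dist n) (eta v) w (k + 1))\<^sup>2)) \<and>
      (\<Sum>w\<in>torusV n. \<Sum>k. (1/2) ^ k * (osc (torusV n) (torus_dist n) (eta v) w (k + 1))\<^sup>2) \<le> C"
    if "n \<ge> 2" "v \<in> torusV n - {(0, 0)}" for n v
    using eta_energy_bound[of n v] norm1_ge_1[OF that(2)] that(1) by (auto simp: C_def)
  moreover have "n \<ge> 2 \<Longrightarrow> n \<ge> 1" for n :: nat by simp
  ultimately show ?thesis
    by (blast intro: eta_L_lower_bound norm1_ge_1)
qed

end
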